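(* Let $N\ge2$, $0<\varepsilon<\pi/2$ and $0<\eta<\min\{\pi/4,\varepsilon/2\}$. For $\lambda\in\Sigma_\varepsilon$ and $\xi'\in\tilde\Sigma_\eta^{N-1}$ let $A=\sqrt{\sum_{j=1}^{N-1}\xi_j^2}$, $B=\sqrt{\lambda+A^2}$ (square roots with positive real part), $\tilde A=\sqrt{\sum_{j=1}^{N-1}|\xi_j|^2}$, and $D(A,B)=B^3+AB^2+3A^2B-A^3$. Then there exists a positive constant $c$ such that \[ c(|\lambda|^{1/2}+\tilde A)^3\le|D(A,B)|\qquad(\lambda\in\Sigma_\varepsilon,\ \xi'\in\tilde\Sigma_\eta^{N-1}). \]
   Context: $\Sigma_\varepsilon=\{\lambda\in\mathbb{C}\setminus\{0\}:|\arg\lambda|<\pi-\varepsilon\}$; $\tilde\Sigma_\eta=\{z\in\mathbb{C}\setminus\{0\}:|\arg z|<\eta\}\cup\{z\in\mathbb{C}\setminus\{0\}:\pi-\eta<|\arg z|\}$, and $\tilde\Sigma_\eta^{N-1}$ is its $(N-1)$-fold product. *)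

theory Defs
  imports "HOL-Analysis.Analysis"
begin

definition Sigma_sector :: "real \<Rightarrow> complex set" where
  "Sigma_sector \<epsilon> = {l. l \<noteq> 0 \<and> \<bar>Arg l\<bar> < pi - \<epsilon>}"

definition tSigma_sector :: "real \<Rightarrow> complex set" where
  "tSigma_sector \<eta> = {z. z \<noteq> 0 \<and> (\<bar>Arg z\<bar> < \<eta> \<or> pi - \<eta> < \<bar>Arg z\<bar>)}"

definition Dfun :: "complex \<Rightarrow> complex \<Rightarrow> complex" where
  "Dfun A B = B^3 + A * B^2 + 3 * A^2 * B - A^3"

end

theory Submission
  imports Defs
begin

text \<open>Put \<open>u = A / |A|\<close> and \<open>t = B / A\<close>, so that \<open>D(A, B) = A\<^sup>3 p(t)\<close> with
  \<open>p(t) = t\<^sup>3 + t\<^sup>2 + 3t - 1\<close> and \<open>\<lambda> / |A|\<^sup>2 = (t\<^sup>2 - 1) u\<^sup>2\<close>. The squares \<open>\<xi>\<^sub>j\<^sup>2\<close> lie in the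
  convex sector \<open>|arg z| \<le> 2\<eta>\<close>, hence so does their sum, so \<open>|arg A| \<le> \<eta>\<close> and
  \<open>|\<xi>'| \<le> k |A|\<close> for a constant \<open>k\<close>. At a root \<open>t\<close> of \<open>p\<close> compatible with \<open>Re B \<ge> 0\<close>, the number
  \<open>(1 - t\<^sup>2) u\<^sup>2\<close> lies strictly inside the sector \<open>|arg z| < \<epsilon>\<close>, i.e. \<open>\<lambda> \<notin> \<Sigma>\<^sub>\<epsilon>\<close>. So \<open>p\<close> has no
  zero on the compact set of admissible \<open>(u, t)\<close> with \<open>|t| \<le> 4\<close>, while \<open>|p(t)| \<ge> |t|\<^sup>3 / 2\<close> for
  \<open>|t| \<ge> 4\<close>; altogether \<open>|p(t)| \<ge> c (|t| + 1)\<^sup>3\<close>, and \<open>sqrt |\<lambda>| + |A| \<le> 2 |A| (|t| + 1)\<close>.\<close>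

section \<open>Sectors\<close>

definition sector :: "real \<Rightarrow> complex set" where
  "sector \<sigma> = {z. \<bar>Im z\<bar> \<le> \<sigma> * Re z}"

lemma abs_Im_eq_tan_abs_Arg:
  assumes "0 < Re z"
  shows "\<bar>Im z\<bar> = tan \<bar>Arg z\<bar> * Re z"
proof -
  have z: "rcis (cmod z) (Arg z) = z" by (rule rcis_cmod_Arg)
  have "\<bar>Arg z\<bar> < pi / 2" using assms Arg_Re_pos by blast
  then have cos_pos: "0 < cos (Arg z)" by (intro cos_gt_zero_pi) auto
  have "tan \<bar>Arg z\<bar> * cos (Arg z) = \<bar>sin (Arg z)\<bar>"
    using cos_pos sin_ge_zero[of "Arg z"] sin_ge_zero[of "- Arg z"] Arg_le_pi[of z] mpi_less_Arg[of z]
    by (cases "0 \<le> Arg z") (auto simp: tan_def)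
  then show ?thesis
    by (subst (1 2) z[symmetric]) (auto simp: abs_mult)
qed

lemma abs_Arg_uminus:
  assumes "z \<noteq> 0"
  shows "\<bar>Arg (- z)\<bar> = pi - \<bar>Arg z\<bar>"
  using Arg_minus[OF assms] mpi_less_Arg[of z] Arg_le_pi[of z] by auto

lemma in_sector_if_abs_Arg_less:
  assumes "z \<noteq> 0" and "\<bar>Arg z\<bar> < \<theta>" and "\<theta> < pi / 2"
  shows "z \<in> sector (tan \<theta>)"
proof -
  have "0 < Re z" using assms Arg_Re_pos[of z] by auto
  moreover have "tan \<bar>Arg z\<bar> \<le> tan \<theta>" using assms by (intro tan_mono_le) auto
  ultimately show ?thesis
    by (simp add: sector_def abs_Im_eq_tan_abs_Arg mult_right_mono)
qed

lemma tSigma_sector_imp_sector: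
  assumes "z \<in> tSigma_sector \<eta>" and "\<eta> < pi / 2"
  shows "z \<in> sector (tan \<eta>) \<or> - z \<in> sector (tan \<eta>)"
proof -
  have "z \<noteq> 0" and "\<bar>Arg z\<bar> < \<eta> \<or> \<bar>Arg (- z)\<bar> < \<eta>"
    using assms(1) abs_Arg_uminus[of z] by (auto simp: tSigma_sector_def)
  then show ?thesis using assms(2) in_sector_if_abs_Arg_less[of _ \<eta>] by auto
qed

lemma Sigma_sector_Im_lower_bound:
  assumes "l \<in> Sigma_sector \<epsilon>" and "0 < \<epsilon>" and "\<epsilon> < pi / 2"
  shows "tan \<epsilon> * Re (- l) \<le> \<bar>Im l\<bar>"
proof (cases "0 < Re (- l)")
  case True
  have "l \<noteq> 0" and "\<epsilon> < \<bar>Arg (- l)\<bar>"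
    using assms(1) abs_Arg_uminus[of l] by (auto simp: Sigma_sector_def)
  moreover have "\<bar>Arg (- l)\<bar> < pi / 2" using True Arg_Re_pos by blast
  ultimately have "tan \<epsilon> \<le> tan \<bar>Arg (- l)\<bar>" using assms(2) by (intro tan_mono_le) auto
  then show ?thesis
    using True abs_Im_eq_tan_abs_Arg[of "- l"] by (simp add: mult_right_mono)
next
  case False
  moreover have "0 < tan \<epsilon>" using assms(2,3) by (simp add: tan_gt_zero)
  ultimately have "tan \<epsilon> * Re (- l) \<le> 0" by (simp add: mult_nonneg_nonpos)
  then show ?thesis using abs_ge_zero[of "Im l"] by linarith
qed

lemma tan_double_less:
  assumes "0 < \<eta>" and "2 * \<eta> < \<epsilon>" and "\<epsilon> < pi / 2"
  shows "2 * tan \<eta> / (1 - (tan \<eta>)\<^sup>2) < tan \<epsilon>"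
proof -
  have "cos \<eta> \<noteq> 0" "cos (2 * \<eta>) \<noteq> 0" using assms cos_gt_zero_pi[of \<eta>] cos_gt_zero_pi[of "2 * \<eta>"] by auto
  then have "2 * tan \<eta> / (1 - (tan \<eta>)\<^sup>2) = tan (2 * \<eta>)" by (simp add: tan_double)
  also have "\<dots> < tan \<epsilon>" using assms by (intro tan_monotone) auto
  finally show ?thesis .
qed

lemma sum_in_sector:
  assumes "\<And>j. j \<in> J \<Longrightarrow> f j \<in> sector \<sigma>"
  shows "(\<Sum>j\<in>J. f j) \<in> sector \<sigma>"
proof -
  have "\<bar>Im (\<Sum>j\<in>J. f j)\<bar> \<le> (\<Sum>j\<in>J. \<bar>Im (f j)\<bar>)"
    by simp
  also have "\<dots> \<le> (\<Sum>j\<in>J. \<sigma> * Re (f j))"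
    using assms by (intro sum_mono) (auto simp: sector_def)
  also have "\<dots> = \<sigma> * Re (\<Sum>j\<in>J. f j)"
    by (simp add: sum_distrib_left)
  finally show ?thesis by (simp add: sector_def)
qed

lemma power2_Im_le_in_sector:
  assumes "z \<in> sector \<tau>"
  shows "(Im z)\<^sup>2 \<le> \<tau>\<^sup>2 * (Re z)\<^sup>2"
proof -
  have "\<bar>Im z\<bar>\<^sup>2 \<le> (\<tau> * Re z)\<^sup>2"
    using assms by (intro power_mono) (auto simp: sector_def)
  then show ?thesis by (simp add: power_mult_distrib)
qed

lemma norm_power2_le_Re_power2_in_sector:
  assumes "z \<in> sector \<tau>"
  shows "(1 - \<tau>\<^sup>2) * (cmod z)\<^sup>2 \<le> (1 + \<tau>\<^sup>2) * Re (z\<^sup>2)"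
proof -
  have Re: "Re (z\<^sup>2) = (Re z)\<^sup>2 - (Im z)\<^sup>2" by (simp add: power2_eq_square)
  show ?thesis
    using power2_Im_le_in_sector[OF assms] unfolding Re cmod_power2 by (simp add: algebra_simps)
qed

lemma power2_in_sector:
  assumes "z \<in> sector \<tau>" and "0 \<le> \<tau>" and "\<tau> < 1"
  shows "z\<^sup>2 \<in> sector (2 * \<tau> / (1 - \<tau>\<^sup>2))"
proof -
  have "\<tau>\<^sup>2 < 1" using assms by (simp add: abs_square_less_1)
  have "\<bar>Re z\<bar> * \<bar>Im z\<bar> \<le> \<bar>Re z\<bar> * (\<tau> * Re z)"
    using assms(1) by (intro mult_left_mono) (auto simp: sector_def)
  also have "\<dots> \<le> \<tau> * (Re z)\<^sup>2"
    using assms(2) by (cases "0 \<le> Re z") (auto simp: power2_eq_square mult_right_mono)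
  finally have Im: "\<bar>Im (z\<^sup>2)\<bar> \<le> 2 * \<tau> * (Re z)\<^sup>2"
    by (simp add: power2_eq_square abs_mult mult_ac)
  have Re: "(1 - \<tau>\<^sup>2) * (Re z)\<^sup>2 \<le> Re (z\<^sup>2)"
    using power2_Im_le_in_sector[OF assms(1)] by (simp add: power2_eq_square algebra_simps)
  have "\<bar>Im (z\<^sup>2)\<bar> \<le> 2 * \<tau> / (1 - \<tau>\<^sup>2) * ((1 - \<tau>\<^sup>2) * (Re z)\<^sup>2)"
    using Im \<open>\<tau>\<^sup>2 < 1\<close> by simp
  also have "\<dots> \<le> 2 * \<tau> / (1 - \<tau>\<^sup>2) * Re (z\<^sup>2)"
    using Re assms \<open>\<tau>\<^sup>2 < 1\<close> by (intro mult_left_mono) auto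
  finally show ?thesis by (simp add: sector_def)
qed

lemma in_sector_if_power2_in_sector:
  assumes "w\<^sup>2 \<in> sector (2 * \<tau> / (1 - \<tau>\<^sup>2))" and "0 \<le> Re w" and "0 < \<tau>" and "\<tau> < 1"
  shows "w \<in> sector \<tau>"
proof (rule ccontr)
  assume "w \<notin> sector \<tau>"
  then have Im: "\<tau> * Re w < \<bar>Im w\<bar>" by (simp add: sector_def)
  with assms(2,3) have "0 < \<bar>Im w\<bar>" by (smt (verit) mult_nonneg_nonneg)
  with assms(2,3) have "0 < Re w + \<tau> * \<bar>Im w\<bar>" by (simp add: add_nonneg_pos)
  with Im have "0 < (\<bar>Im w\<bar> - \<tau> * Re w) * (Re w + \<tau> * \<bar>Im w\<bar>)" by simp
  also have "\<dots> = ((1 - \<tau>\<^sup>2) * \<bar>Im (w\<^sup>2)\<bar> - 2 * \<tau> * Re (w\<^sup>2)) / 2"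
    using assms(2) by (simp add: power2_eq_square abs_mult algebra_simps)
  finally have "2 * \<tau> * Re (w\<^sup>2) < (1 - \<tau>\<^sup>2) * \<bar>Im (w\<^sup>2)\<bar>" by simp
  moreover have "0 < 1 - \<tau>\<^sup>2" using assms by (simp add: abs_square_less_1)
  ultimately show False using assms(1) by (simp add: sector_def field_simps)
qed

lemma Re_pos_if_in_sector:
  assumes "z \<in> sector \<tau>" and "z \<noteq> 0" and "0 < \<tau>"
  shows "0 < Re z"
proof -
  have Im: "\<bar>Im z\<bar> \<le> \<tau> * Re z" using assms(1) by (simp add: sector_def)
  then have "0 \<le> Re z" using assms(3) by (smt (verit) zero_le_mult_iff)
  moreover have "Re z \<noteq> 0" using Im assms(2) complex_eq_iff by force
  ultimately show ?thesis by simp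
qed

lemma power2_in_open_sector:
  assumes "u \<in> sector \<tau>" and "u \<noteq> 0" and "0 < \<tau>" and "\<tau> < 1" and "2 * \<tau> / (1 - \<tau>\<^sup>2) < T"
  shows "\<bar>Im (u\<^sup>2)\<bar> < T * Re (u\<^sup>2)"
proof -
  have "0 < 1 - \<tau>\<^sup>2" using assms by (simp add: abs_square_less_1)
  moreover have "0 < (cmod u)\<^sup>2" using assms(2) by simp
  ultimately have "0 < (1 + \<tau>\<^sup>2) * Re (u\<^sup>2)"
    using norm_power2_le_Re_power2_in_sector[OF assms(1)] by (smt (verit) mult_pos_pos)
  then have "0 < Re (u\<^sup>2)" by (rule zero_less_mult_pos) (simp add: add_pos_nonneg)
  moreover have "\<bar>Im (u\<^sup>2)\<bar> \<le> 2 * \<tau> / (1 - \<tau>\<^sup>2) * Re (u\<^sup>2)"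
    using power2_in_sector[OF assms(1)] assms(3,4) by (simp add: sector_def)
  ultimately show ?thesis using assms(5) by (smt (verit) mult_strict_right_mono)
qed

lemma csqrt_sum_power2_in_sector:
  assumes "finite J" and "J \<noteq> {}" and "0 < \<tau>" and "\<tau> < 1"
    and \<xi>: "\<And>j. j \<in> J \<Longrightarrow> \<xi> j \<noteq> 0 \<and> (\<xi> j \<in> sector \<tau> \<or> - \<xi> j \<in> sector \<tau>)"
  defines "A \<equiv> csqrt (\<Sum>j\<in>J. (\<xi> j)\<^sup>2)"
  shows "A \<in> sector \<tau>" and "A \<noteq> 0"
    and "sqrt (\<Sum>j\<in>J. (cmod (\<xi> j))\<^sup>2) \<le> sqrt ((1 + \<tau>\<^sup>2) / (1 - \<tau>\<^sup>2)) * cmod A"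
proof -
  define S where "S = (\<Sum>j\<in>J. (\<xi> j)\<^sup>2)"
  have "0 < 1 - \<tau>\<^sup>2" using assms by (simp add: abs_square_less_1)
  have sq: "(\<xi> j)\<^sup>2 \<in> sector (2 * \<tau> / (1 - \<tau>\<^sup>2))
      \<and> (1 - \<tau>\<^sup>2) * (cmod (\<xi> j))\<^sup>2 \<le> (1 + \<tau>\<^sup>2) * Re ((\<xi> j)\<^sup>2)" if "j \<in> J" for j
    using \<xi>[OF that] power2_in_sector[of _ \<tau>] norm_power2_le_Re_power2_in_sector[of _ \<tau>] assms(3,4)
    by (metis less_le norm_minus_cancel power2_minus)
  have S: "S \<in> sector (2 * \<tau> / (1 - \<tau>\<^sup>2))"
    unfolding S_def using sq by (intro sum_in_sector) auto
  have "(1 - \<tau>\<^sup>2) * (\<Sum>j\<in>J. (cmod (\<xi> j))\<^sup>2) \<le> (1 + \<tau>\<^sup>2) * Re S"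
    using sq by (simp add: S_def sum_distrib_left sum_mono)
  then have norm_le: "(\<Sum>j\<in>J. (cmod (\<xi> j))\<^sup>2) \<le> (1 + \<tau>\<^sup>2) / (1 - \<tau>\<^sup>2) * Re S"
    using \<open>0 < 1 - \<tau>\<^sup>2\<close> by (simp add: field_simps)
  have "0 < (\<Sum>j\<in>J. (cmod (\<xi> j))\<^sup>2)" using assms(1,2) \<xi> by (intro sum_pos) auto
  with norm_le have "0 < Re S" using \<open>0 < 1 - \<tau>\<^sup>2\<close> by (smt (verit) divide_pos_pos zero_le_power2 mult_nonneg_nonpos)
  then show "A \<noteq> 0" by (auto simp: A_def S_def[symmetric])
  have "A\<^sup>2 = S" and "0 \<le> Re A" by (simp_all only: A_def S_def power2_csqrt Re_csqrt)
  then show "A \<in> sector \<tau>" using in_sector_if_power2_in_sector[of A \<tau>] S assms(3,4) by simp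
  have "Re S \<le> (cmod A)\<^sup>2" by (simp add: A_def S_def[symmetric] norm_power[symmetric] complex_Re_le_cmod)
  with norm_le have "(\<Sum>j\<in>J. (cmod (\<xi> j))\<^sup>2) \<le> (1 + \<tau>\<^sup>2) / (1 - \<tau>\<^sup>2) * (cmod A)\<^sup>2"
    using \<open>0 < 1 - \<tau>\<^sup>2\<close> by (smt (verit) divide_pos_pos mult_left_mono zero_le_power2)
  then show "sqrt (\<Sum>j\<in>J. (cmod (\<xi> j))\<^sup>2) \<le> sqrt ((1 + \<tau>\<^sup>2) / (1 - \<tau>\<^sup>2)) * cmod A"
    by (metis real_sqrt_abs real_sqrt_le_mono real_sqrt_mult abs_norm_cancel)
qed

section \<open>The cubic factor of \<open>D\<close>\<close>

definition Dcubic :: "complex \<Rightarrow> complex" where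
  "Dcubic t = t ^ 3 + t\<^sup>2 + 3 * t - 1"

lemma Dfun_eq_Dcubic: "Dfun A (t * A) = A ^ 3 * Dcubic t"
  by (simp add: Dfun_def Dcubic_def power2_eq_square power3_eq_cube algebra_simps)

lemma Dcubic_roots:
  assumes "Dcubic t = 0"
  shows "Im t = 0 \<and> 0 < Re t \<and> Re t < 1 \<or> Im t \<noteq> 0 \<and> -1 < Re t \<and> Re t < 0"
proof -
  define x y where "x = Re t" and "y = Im t"
  have Re: "x ^ 3 - 3 * x * y\<^sup>2 + x\<^sup>2 - y\<^sup>2 + 3 * x - 1 = 0"
    using arg_cong[OF assms, of Re]
    by (simp add: Dcubic_def x_def y_def power2_eq_square power3_eq_cube algebra_simps)
  have Im: "y * (3 * x\<^sup>2 - y\<^sup>2 + 2 * x + 3) = 0"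
    using arg_cong[OF assms, of Im]
    by (simp add: Dcubic_def x_def y_def power2_eq_square power3_eq_cube algebra_simps)
  show ?thesis
  proof (cases "y = 0")
    case True
    with Re have x: "x * (x\<^sup>2 + x + 3) = 1"
      by (simp add: power2_eq_square power3_eq_cube algebra_simps)
    have "0 < x\<^sup>2 + x + 3" using zero_le_power2[of "x + 1/2"] by (simp add: power2_eq_square algebra_simps)
    have "0 < x"
    proof (rule ccontr)
      assume "\<not> 0 < x"
      then have "x * (x\<^sup>2 + x + 3) \<le> 0" using \<open>0 < x\<^sup>2 + x + 3\<close> by (simp add: mult_nonpos_nonneg)
      with x \<open>\<not> 0 < x\<close> show False by simp
    qed
    moreover have "x < 1"
    proof (rule ccontr)
      assume "\<not> x < 1"
      then have "1 \<le> x" by simp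
      moreover from this have "1 \<le> x\<^sup>2" by simp
      ultimately have "1 \<le> x" "5 \<le> x\<^sup>2 + x + 3" by linarith+
      then have "1 * 5 \<le> x * (x\<^sup>2 + x + 3)" by (intro mult_mono) auto
      with x show False by simp
    qed
    ultimately show ?thesis using True by (simp add: x_def y_def)
  next
    case False
    with Im have y: "y\<^sup>2 = 3 * x\<^sup>2 + 2 * x + 3" by simp
    have "2 * x\<^sup>2 * (x + 1) = - 2 * x - 1"
      using Re unfolding y by (simp add: power2_eq_square power3_eq_cube algebra_simps)
    then have "x < 0" "-1 < x"
      using mult_nonneg_nonneg[of "2 * x\<^sup>2" "x + 1"] mult_nonneg_nonpos[of "2 * x\<^sup>2" "x + 1"]
      by (smt (verit) zero_le_power2)+
    with False show ?thesis by (simp add: x_def y_def)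
  qed
qed

lemma second_quadrant_Im_neg:
  assumes "0 < Re u" and "0 \<le> Re (t * u)" and "-1 < Re t" and "Re t < 0" and "0 < Im t"
  shows "Im (u\<^sup>2) < 0" and "Im ((1 - t\<^sup>2) * u\<^sup>2) < 0"
proof -
  define x y X Y where "x = Re t" and "y = Im t" and "X = Re u" and "Y = Im u"
  have "0 < X" "0 < y" "x < 0" "x\<^sup>2 < 1" using assms by (simp_all add: X_def x_def y_def abs_square_less_1)
  have tu: "- x * X \<le> y * (- Y)" using assms(2) by (simp add: x_def y_def X_def Y_def)
  moreover have "0 < - x * X" using \<open>0 < X\<close> \<open>x < 0\<close> by (simp add: mult_neg_pos)
  ultimately have "0 < y * (- Y)" by linarith
  then have "Y < 0" using \<open>0 < y\<close> by (simp add: mult_less_0_iff)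
  then show "Im (u\<^sup>2) < 0" using \<open>0 < X\<close> by (simp add: X_def Y_def power2_eq_square mult_less_0_iff)
  have "y * (- x * y * X\<^sup>2) = y\<^sup>2 * (- x * X\<^sup>2)" by (simp add: power2_eq_square)
  also have "\<dots> \<le> (1 - x\<^sup>2 + y\<^sup>2) * (- x * X\<^sup>2)"
    using \<open>x\<^sup>2 < 1\<close> \<open>x < 0\<close> by (intro mult_right_mono) (auto simp: mult_nonpos_nonneg)
  also have "\<dots> \<le> (1 - x\<^sup>2 + y\<^sup>2) * (X * (y * - Y))"
    using tu \<open>0 < X\<close> \<open>x\<^sup>2 < 1\<close> by (intro mult_left_mono) (auto simp: power2_eq_square)
  also have "\<dots> = y * ((1 - x\<^sup>2 + y\<^sup>2) * X * (- Y))" by (simp add: mult_ac)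
  finally have "- x * y * X\<^sup>2 \<le> (1 - x\<^sup>2 + y\<^sup>2) * X * (- Y)"
    using \<open>0 < y\<close> by (rule mult_left_le_imp_le)
  moreover have "0 < - x * y * Y\<^sup>2" using \<open>x < 0\<close> \<open>0 < y\<close> \<open>Y < 0\<close> by (simp add: mult_neg_pos)
  ultimately show "Im ((1 - t\<^sup>2) * u\<^sup>2) < 0"
    by (simp add: x_def y_def X_def Y_def power2_eq_square algebra_simps)
qed

text \<open>Since \<open>1 - t\<^sup>2\<close> lies in the open first quadrant, the previous lemma places
  \<open>arg ((1 - t\<^sup>2) u\<^sup>2)\<close> strictly between \<open>arg (u\<^sup>2)\<close> and \<open>0\<close>.\<close>

lemma second_quadrant_in_open_sector:
  assumes u: "u \<in> sector \<tau>" "u \<noteq> 0" and \<tau>: "0 < \<tau>" "\<tau> < 1" "2 * \<tau> / (1 - \<tau>\<^sup>2) < T"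
    and tu: "0 \<le> Re (t * u)" and t: "-1 < Re t" "Re t < 0" "0 < Im t"
  shows "\<bar>Im ((1 - t\<^sup>2) * u\<^sup>2)\<bar> < T * Re ((1 - t\<^sup>2) * u\<^sup>2)"
proof -
  define P q where "P = Re (1 - t\<^sup>2)" and "q = Im (1 - t\<^sup>2)"
  have w: "Re ((1 - t\<^sup>2) * u\<^sup>2) = P * Re (u\<^sup>2) - q * Im (u\<^sup>2)"
    "Im ((1 - t\<^sup>2) * u\<^sup>2) = P * Im (u\<^sup>2) + q * Re (u\<^sup>2)"
    by (simp_all add: P_def q_def)
  have "P = 1 - (Re t)\<^sup>2 + (Im t)\<^sup>2" and q: "q = 2 * (- Re t) * Im t"
    by (simp_all add: P_def q_def power2_eq_square)
  moreover have "(Re t)\<^sup>2 < 1" using t by (simp add: abs_square_less_1)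
  ultimately have "0 < P" using zero_le_power2[of "Im t"] by linarith
  have "0 < q" unfolding q using t by (simp add: mult_less_0_iff)
  have open_u2: "\<bar>Im (u\<^sup>2)\<bar> < T * Re (u\<^sup>2)" using power2_in_open_sector[OF u \<tau>] .
  have Im_neg: "Im (u\<^sup>2) < 0" "Im ((1 - t\<^sup>2) * u\<^sup>2) < 0"
    using second_quadrant_Im_neg[OF Re_pos_if_in_sector[OF u \<tau>(1)] tu t] by auto
  have "0 < 1 - \<tau>\<^sup>2" using \<tau> by (simp add: abs_square_less_1)
  then have "0 < T" using \<tau> by (smt (verit) divide_pos_pos)
  then have "0 < Re (u\<^sup>2)" using open_u2 by (smt (verit) zero_less_mult_iff)
  have "P * (- Im (u\<^sup>2)) < P * (T * Re (u\<^sup>2))"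
    using open_u2 Im_neg(1) \<open>0 < P\<close> by (intro mult_strict_left_mono) auto
  moreover have "0 < q * Re (u\<^sup>2)" "0 < T * (q * - Im (u\<^sup>2))"
    using \<open>0 < q\<close> \<open>0 < T\<close> \<open>0 < Re (u\<^sup>2)\<close> Im_neg(1) by (simp_all add: mult_pos_neg)
  ultimately show ?thesis
    using Im_neg(2) unfolding w abs_less_iff by (simp add: algebra_simps)
qed

lemma Dcubic_root_in_open_sector:
  assumes "Dcubic t = 0"
    and u: "u \<in> sector \<tau>" "u \<noteq> 0" and \<tau>: "0 < \<tau>" "\<tau> < 1" "2 * \<tau> / (1 - \<tau>\<^sup>2) < T"
    and tu: "0 \<le> Re (t * u)"
  shows "\<bar>Im ((1 - t\<^sup>2) * u\<^sup>2)\<bar> < T * Re ((1 - t\<^sup>2) * u\<^sup>2)"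
  using Dcubic_roots[OF assms(1)]
proof (elim disjE conjE)
  assume t: "Im t = 0" "0 < Re t" "Re t < 1"
  then have "1 - t\<^sup>2 = of_real (1 - (Re t)\<^sup>2)" by (simp add: complex_eq_iff power2_eq_square)
  moreover have "0 < 1 - (Re t)\<^sup>2" using t by (simp add: abs_square_less_1)
  ultimately show ?thesis
    using power2_in_open_sector[OF u \<tau>] by (simp add: abs_mult)
next
  assume "Im t \<noteq> 0" and t: "-1 < Re t" "Re t < 0"
  show ?thesis
  proof (cases "0 < Im t")
    case True
    show ?thesis using second_quadrant_in_open_sector[OF u \<tau> tu t True] .
  next
    case False
    with \<open>Im t \<noteq> 0\<close> have "0 < Im (cnj t)" by simp
    moreover have "cnj u \<in> sector \<tau>" "cnj u \<noteq> 0" "0 \<le> Re (cnj t * cnj u)"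
      using u tu by (simp_all add: sector_def)
    ultimately have "\<bar>Im ((1 - (cnj t)\<^sup>2) * (cnj u)\<^sup>2)\<bar> < T * Re ((1 - (cnj t)\<^sup>2) * (cnj u)\<^sup>2)"
      using second_quadrant_in_open_sector[of "cnj u" \<tau> T "cnj t"] \<tau> t by simp
    moreover have "(1 - (cnj t)\<^sup>2) * (cnj u)\<^sup>2 = cnj ((1 - t\<^sup>2) * u\<^sup>2)" by simp
    ultimately show ?thesis by (simp only: cnj.sel abs_minus_cancel)
  qed
qed

lemma Dcubic_large:
  assumes "4 \<le> cmod t"
  shows "cmod t ^ 3 / 2 \<le> cmod (Dcubic t)"
proof -
  define r where "r = cmod t"
  have "t ^ 3 = Dcubic t - (t\<^sup>2 + 3 * t - 1)" by (simp add: Dcubic_def)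
  then have "r ^ 3 \<le> cmod (Dcubic t) + cmod (t\<^sup>2 + 3 * t - 1)"
    by (metis norm_power norm_triangle_ineq4 r_def)
  also have "cmod (t\<^sup>2 + 3 * t - 1) \<le> cmod (t\<^sup>2) + cmod (3 * t) + cmod (1 :: complex)"
    by (meson norm_triangle_ineq norm_triangle_ineq4 order_trans add_right_mono)
  also have "\<dots> = r\<^sup>2 + 3 * r + 1" by (simp add: r_def norm_power norm_mult)
  finally have "r ^ 3 \<le> cmod (Dcubic t) + (r\<^sup>2 + 3 * r + 1)" by simp
  moreover have "r\<^sup>2 * 1 \<le> r\<^sup>2 * (r / 2 - 1)"
    using assms by (intro mult_left_mono) (auto simp: r_def)
  moreover have "4 * 1 \<le> r * (r - 3)"
    using assms by (intro mult_mono) (auto simp: r_def)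
  ultimately show ?thesis by (simp add: r_def power2_eq_square power3_eq_cube algebra_simps)
qed

lemma compact_norm_bounded_below:
  fixes f :: "'a::topological_space \<Rightarrow> 'b::real_normed_vector"
  assumes "compact K" and "continuous_on K f" and "\<And>x. x \<in> K \<Longrightarrow> f x \<noteq> 0"
  shows "\<exists>m>0. \<forall>x\<in>K. m \<le> norm (f x)"
proof (cases "K = {}")
  case False
  obtain x0 where "x0 \<in> K" and "\<forall>x\<in>K. norm (f x0) \<le> norm (f x)"
    using continuous_attains_inf[OF assms(1) False continuous_on_norm[OF assms(2)]] by blast
  then show ?thesis using assms(3) by (intro exI[of _ "norm (f x0)"]) auto
qed (auto intro: exI[of _ 1])

text \<open>The parameters \<open>(u, t) = (A / |A|, B / A)\<close>; the last condition is what \<open>\<lambda> \<in> \<Sigma>\<^sub>\<epsilon>\<close>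
  says about \<open>\<lambda> / |A|\<^sup>2 = (t\<^sup>2 - 1) u\<^sup>2\<close>, with \<open>T = tan \<epsilon>\<close>.\<close>

definition Dcubic_params :: "real \<Rightarrow> real \<Rightarrow> (complex \<times> complex) set" where
  "Dcubic_params \<tau> T = {(u, t). cmod u = 1 \<and> u \<in> sector \<tau> \<and> 0 \<le> Re (t * u)
     \<and> T * Re ((1 - t\<^sup>2) * u\<^sup>2) \<le> \<bar>Im ((1 - t\<^sup>2) * u\<^sup>2)\<bar>}"

lemma closed_Dcubic_params: "closed (Dcubic_params \<tau> T)"
  unfolding Dcubic_params_def sector_def case_prod_unfold mem_Collect_eq
  by (intro closed_Collect_conj closed_Collect_eq closed_Collect_le continuous_intros)

lemma Dcubic_bounded_below:
  assumes "0 < \<tau>" and "\<tau> < 1" and "2 * \<tau> / (1 - \<tau>\<^sup>2) < T"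
  shows "\<exists>c>0. \<forall>(u, t) \<in> Dcubic_params \<tau> T. c * (cmod t + 1) ^ 3 \<le> cmod (Dcubic t)"
proof -
  define K where "K = Dcubic_params \<tau> T \<inter> cball 0 1 \<times> cball 0 4"
  have "compact K"
    unfolding K_def using closed_Dcubic_params by (intro closed_Int_compact compact_Times) auto
  moreover have "continuous_on K (\<lambda>p. Dcubic (snd p))"
    unfolding Dcubic_def by (intro continuous_intros)
  moreover have "Dcubic t \<noteq> 0" if "(u, t) \<in> K" for u t
  proof
    assume "Dcubic t = 0"
    moreover have "u \<in> sector \<tau>" "u \<noteq> 0" "0 \<le> Re (t * u)"
      and "T * Re ((1 - t\<^sup>2) * u\<^sup>2) \<le> \<bar>Im ((1 - t\<^sup>2) * u\<^sup>2)\<bar>"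
      using that by (auto simp: K_def Dcubic_params_def)
    ultimately show False using Dcubic_root_in_open_sector[of t u \<tau> T] assms by fastforce
  qed
  ultimately obtain m where "0 < m" and m: "\<And>u t. (u, t) \<in> K \<Longrightarrow> m \<le> cmod (Dcubic t)"
    using compact_norm_bounded_below[of K "\<lambda>p. Dcubic (snd p)"] by fastforce
  define c where "c = min m 32 / 125"
  have "0 < c" using \<open>0 < m\<close> by (simp add: c_def)
  have "c * (cmod t + 1) ^ 3 \<le> cmod (Dcubic t)" if ut: "(u, t) \<in> Dcubic_params \<tau> T" for u t
  proof (cases "cmod t \<le> 4")
    case True
    then have "(cmod t + 1) ^ 3 \<le> 5 ^ 3" by (intro power_mono) auto
    then have "c * (cmod t + 1) ^ 3 \<le> c * 5 ^ 3" using \<open>0 < c\<close> by (intro mult_left_mono) auto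
    also have "\<dots> \<le> m" by (simp add: c_def)
    also have "m \<le> cmod (Dcubic t)" using ut True by (intro m) (auto simp: K_def Dcubic_params_def)
    finally show ?thesis .
  next
    case False
    then have "(cmod t + 1) ^ 3 \<le> (5 / 4 * cmod t) ^ 3" by (intro power_mono) auto
    then have "c * (cmod t + 1) ^ 3 \<le> c * (5 / 4 * cmod t) ^ 3" using \<open>0 < c\<close> by (intro mult_left_mono) auto
    also have "\<dots> \<le> 32 / 125 * (5 / 4 * cmod t) ^ 3" by (intro mult_right_mono) (auto simp: c_def)
    also have "\<dots> = cmod t ^ 3 / 2" by (simp add: power3_eq_cube)
    also have "\<dots> \<le> cmod (Dcubic t)" using False by (intro Dcubic_large) auto
    finally show ?thesis .
  qed
  with \<open>0 < c\<close> show ?thesis by blast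
qed

lemma normalized_in_Dcubic_params:
  assumes A: "A \<in> sector \<tau>" "A \<noteq> 0" and B: "0 \<le> Re B" "B\<^sup>2 = lam + A\<^sup>2"
    and lam: "T * Re (- lam) \<le> \<bar>Im lam\<bar>"
  shows "(A / of_real (cmod A), B / A) \<in> Dcubic_params \<tau> T"
proof -
  define a where "a = cmod A"
  have "0 < a" using A(2) by (simp add: a_def)
  have tu: "B / A * (A / of_real a) = B / of_real a"
    and w: "(1 - (B / A)\<^sup>2) * (A / of_real a)\<^sup>2 = - lam / of_real (a\<^sup>2)"
    using A(2) B(2) by (simp_all add: field_simps)
  have "cmod (A / of_real a) = 1" using \<open>0 < a\<close> by (simp add: a_def norm_divide)
  moreover have "A / of_real a \<in> sector \<tau>"
    using A(1) \<open>0 < a\<close> by (simp add: sector_def divide_right_mono)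
  moreover have "0 \<le> Re (B / of_real a)"
    using B(1) \<open>0 < a\<close> by simp
  moreover have "T * Re (- lam / of_real (a\<^sup>2)) \<le> \<bar>Im (- lam / of_real (a\<^sup>2))\<bar>"
    using divide_right_mono[OF lam, of "a\<^sup>2"] by simp
  ultimately show ?thesis
    unfolding Dcubic_params_def mem_Collect_eq prod.case tu[unfolded a_def] w[unfolded a_def]
    by (simp add: a_def)
qed

lemma sqrt_norm_power2_mult_le:
  "sqrt (cmod (A\<^sup>2 * (t\<^sup>2 - 1))) \<le> cmod A * (cmod t + 1)"
proof -
  have "cmod (t\<^sup>2 - 1) \<le> (cmod t)\<^sup>2 + 1"
    using norm_triangle_ineq4[of "t\<^sup>2" 1] by (simp add: norm_power)
  also have "\<dots> \<le> (cmod t + 1)\<^sup>2" by (simp add: power2_eq_square algebra_simps)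
  finally have "cmod (A\<^sup>2 * (t\<^sup>2 - 1)) \<le> (cmod A * (cmod t + 1))\<^sup>2"
    by (simp add: norm_mult norm_power power_mult_distrib mult_left_mono)
  then show ?thesis by (simp add: real_le_lsqrt)
qed

lemma Dfun_bounded_below:
  assumes "0 < \<tau>" and "\<tau> < 1" and "2 * \<tau> / (1 - \<tau>\<^sup>2) < T"
  shows "\<exists>c>0. \<forall>A B lam. A \<in> sector \<tau> \<longrightarrow> A \<noteq> 0 \<longrightarrow> 0 \<le> Re B \<longrightarrow> B\<^sup>2 = lam + A\<^sup>2
    \<longrightarrow> T * Re (- lam) \<le> \<bar>Im lam\<bar> \<longrightarrow> c * (sqrt (cmod lam) + cmod A) ^ 3 \<le> cmod (Dfun A B)"
proof -
  obtain c where "0 < c" and c: "\<forall>(u, t) \<in> Dcubic_params \<tau> T. c * (cmod t + 1) ^ 3 \<le> cmod (Dcubic t)"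
    using Dcubic_bounded_below[OF assms] by blast
  have "c / 8 * (sqrt (cmod lam) + cmod A) ^ 3 \<le> cmod (Dfun A B)"
    if A: "A \<in> sector \<tau>" "A \<noteq> 0" and B: "0 \<le> Re B" "B\<^sup>2 = lam + A\<^sup>2"
      and lam: "T * Re (- lam) \<le> \<bar>Im lam\<bar>" for A B lam
  proof -
    define t where "t = B / A"
    have "B = t * A" and lam_eq: "lam = A\<^sup>2 * (t\<^sup>2 - 1)"
      using A(2) B(2) by (simp_all add: t_def field_simps)
    then have D: "cmod (Dfun A B) = cmod A ^ 3 * cmod (Dcubic t)"
      by (simp add: Dfun_eq_Dcubic norm_mult norm_power)
    have "cmod A * 1 \<le> cmod A * (cmod t + 1)" by (intro mult_left_mono) auto
    then have "sqrt (cmod lam) + cmod A \<le> 2 * (cmod A * (cmod t + 1))"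
      using sqrt_norm_power2_mult_le[of A t] unfolding lam_eq by linarith
    then have "c / 8 * (sqrt (cmod lam) + cmod A) ^ 3 \<le> c / 8 * (2 * (cmod A * (cmod t + 1))) ^ 3"
      using \<open>0 < c\<close> by (intro mult_left_mono power_mono) auto
    also have "\<dots> = cmod A ^ 3 * (c * (cmod t + 1) ^ 3)" by (simp add: power_mult_distrib)
    also have "\<dots> \<le> cmod A ^ 3 * cmod (Dcubic t)"
      using c normalized_in_Dcubic_params[OF A B lam] by (intro mult_left_mono) (auto simp: t_def)
    finally show ?thesis using D by simp
  qed
  with \<open>0 < c\<close> show ?thesis by (intro exI[of _ "c / 8"]) auto
qed

lemma Dfun_bounded_below_sum:
  assumes "finite J" and "J \<noteq> {}" and \<tau>: "0 < \<tau>" "\<tau> < 1" "2 * \<tau> / (1 - \<tau>\<^sup>2) < T"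
  shows "\<exists>c>0. \<forall>lam \<xi>. (\<forall>j\<in>J. \<xi> j \<noteq> 0 \<and> (\<xi> j \<in> sector \<tau> \<or> - \<xi> j \<in> sector \<tau>))
    \<longrightarrow> T * Re (- lam) \<le> \<bar>Im lam\<bar>
    \<longrightarrow> c * (sqrt (cmod lam) + sqrt (\<Sum>j\<in>J. (cmod (\<xi> j))\<^sup>2)) ^ 3
        \<le> cmod (Dfun (csqrt (\<Sum>j\<in>J. (\<xi> j)\<^sup>2)) (csqrt (lam + (csqrt (\<Sum>j\<in>J. (\<xi> j)\<^sup>2))\<^sup>2)))"
proof -
  obtain c where "0 < c" and c: "\<forall>A B lam. A \<in> sector \<tau> \<longrightarrow> A \<noteq> 0 \<longrightarrow> 0 \<le> Re B \<longrightarrow> B\<^sup>2 = lam + A\<^sup>2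
      \<longrightarrow> T * Re (- lam) \<le> \<bar>Im lam\<bar> \<longrightarrow> c * (sqrt (cmod lam) + cmod A) ^ 3 \<le> cmod (Dfun A B)"
    using Dfun_bounded_below[OF \<tau>] by blast
  define k where "k = sqrt ((1 + \<tau>\<^sup>2) / (1 - \<tau>\<^sup>2))"
  have "1 \<le> k" using \<tau> by (simp add: k_def abs_square_less_1)
  have "c / k ^ 3 * (sqrt (cmod lam) + sqrt (\<Sum>j\<in>J. (cmod (\<xi> j))\<^sup>2)) ^ 3
      \<le> cmod (Dfun (csqrt (\<Sum>j\<in>J. (\<xi> j)\<^sup>2)) (csqrt (lam + (csqrt (\<Sum>j\<in>J. (\<xi> j)\<^sup>2))\<^sup>2)))"
    if \<xi>: "\<forall>j\<in>J. \<xi> j \<noteq> 0 \<and> (\<xi> j \<in> sector \<tau> \<or> - \<xi> j \<in> sector \<tau>)"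
      and lam: "T * Re (- lam) \<le> \<bar>Im lam\<bar>" for lam \<xi>
  proof -
    define A where "A = csqrt (\<Sum>j\<in>J. (\<xi> j)\<^sup>2)"
    have A: "A \<in> sector \<tau>" "A \<noteq> 0" and tA: "sqrt (\<Sum>j\<in>J. (cmod (\<xi> j))\<^sup>2) \<le> k * cmod A"
      using csqrt_sum_power2_in_sector[of J \<tau> \<xi>] assms \<xi> by (auto simp: A_def k_def)
    have D: "c * (sqrt (cmod lam) + cmod A) ^ 3 \<le> cmod (Dfun A (csqrt (lam + A\<^sup>2)))"
      using c[rule_format, OF A Re_csqrt power2_csqrt lam] .
    have "sqrt (cmod lam) + sqrt (\<Sum>j\<in>J. (cmod (\<xi> j))\<^sup>2) \<le> k * (sqrt (cmod lam) + cmod A)"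
      using tA mult_right_mono[OF \<open>1 \<le> k\<close> real_sqrt_ge_zero[of "cmod lam"]]
      by (simp add: distrib_left mult.commute)
    moreover have "0 \<le> sqrt (\<Sum>j\<in>J. (cmod (\<xi> j))\<^sup>2)" by (simp add: sum_nonneg)
    ultimately have "c / k ^ 3 * (sqrt (cmod lam) + sqrt (\<Sum>j\<in>J. (cmod (\<xi> j))\<^sup>2)) ^ 3
        \<le> c / k ^ 3 * (k * (sqrt (cmod lam) + cmod A)) ^ 3"
      using \<open>0 < c\<close> \<open>1 \<le> k\<close> by (intro mult_left_mono power_mono) auto
    also have "\<dots> = c * (sqrt (cmod lam) + cmod A) ^ 3"
      using \<open>1 \<le> k\<close> by (simp add: power_mult_distrib)
    finally show ?thesis using D by (simp add: A_def)
  qed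
  moreover have "0 < c / k ^ 3" using \<open>0 < c\<close> \<open>1 \<le> k\<close> by simp
  ultimately show ?thesis by blast
qed

theorem lemma6p3:
  fixes N :: nat and \<epsilon> \<eta> :: real
  assumes "N \<ge> 2" and "0 < \<epsilon>" and "\<epsilon> < pi / 2"
    and "0 < \<eta>" and "\<eta> < min (pi / 4) (\<epsilon> / 2)"
  shows "\<exists>c>0. \<forall>lam \<in> Sigma_sector \<epsilon>. \<forall>\<xi> :: nat \<Rightarrow> complex.
           (\<forall>j\<in>{1..N-1}. \<xi> j \<in> tSigma_sector \<eta>) \<longrightarrow>
           (let A = csqrt (\<Sum>j=1..N-1. (\<xi> j)^2);
                B = csqrt (lam + A^2);
                tA = sqrt (\<Sum>j=1..N-1. (cmod (\<xi> j))^2)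
            in c * (sqrt (cmod lam) + tA) ^ 3 \<le> cmod (Dfun A B))"
proof -
  define \<tau> where "\<tau> = tan \<eta>"
  have \<tau>: "0 < \<tau>" "\<tau> < 1" "2 * \<tau> / (1 - \<tau>\<^sup>2) < tan \<epsilon>"
    using assms tan_monotone[of \<eta> "pi / 4"] tan_double_less[of \<eta> \<epsilon>]
    by (auto simp: \<tau>_def tan_45 intro: tan_gt_zero)
  obtain c where "0 < c" and c: "\<forall>lam \<xi>.
      (\<forall>j\<in>{1..N-1}. \<xi> j \<noteq> 0 \<and> (\<xi> j \<in> sector \<tau> \<or> - \<xi> j \<in> sector \<tau>))
      \<longrightarrow> tan \<epsilon> * Re (- lam) \<le> \<bar>Im lam\<bar>
      \<longrightarrow> c * (sqrt (cmod lam) + sqrt (\<Sum>j=1..N-1. (cmod (\<xi> j))\<^sup>2)) ^ 3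
          \<le> cmod (Dfun (csqrt (\<Sum>j=1..N-1. (\<xi> j)\<^sup>2)) (csqrt (lam + (csqrt (\<Sum>j=1..N-1. (\<xi> j)\<^sup>2))\<^sup>2)))"
    using Dfun_bounded_below_sum[OF _ _ \<tau>, of "{1..N-1}"] assms(1) by fastforce
  have "\<xi> j \<noteq> 0 \<and> (\<xi> j \<in> sector \<tau> \<or> - \<xi> j \<in> sector \<tau>)" if "\<xi> j \<in> tSigma_sector \<eta>" for \<xi> :: "nat \<Rightarrow> complex" and j
    using that tSigma_sector_imp_sector[of "\<xi> j" \<eta>] assms by (auto simp: \<tau>_def tSigma_sector_def)
  then show ?thesis
    using \<open>0 < c\<close> c Sigma_sector_Im_lower_bound[OF _ assms(2,3)] unfolding Let_def by blast
qed

end
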